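(* For all integers $m,n\ge 0$ and every $\sigma>0$, $$0<\Lambda_{m,n}(\sigma)-\Lambda_{m,n}(0)<\frac{4}{r}\sigma .$$
   Context: Fix $r>0$ (the inradius of an equilateral triangle $T$). For integers $m,n\ge0$ and $\sigma\ge0$, let $(L,M,N)$ with $L\in(-\pi/2,0]$ and $M,N\in[0,\pi/2)$ be the unique solution of the system $$\big(2L-M-N-(m+n)\pi\big)\tan L=3r\sigma,\quad \big(2M-N-L+m\pi\big)\tan M=3r\sigma,\quad \big(2N-L-M+n\pi\big)\tan N=3r\sigma .$$ Set $\mu=\frac{2M-N-L}{\pi}+m$, $\nu=\frac{2N-L-M}{\pi}+n$, and $\Lambda_{m,n}(\sigma)=\frac{4\pi^2}{27r^2}(\mu^2+\mu\nu+\nu^2)$. In particular $\Lambda_{m,n}(0)=\frac{4\pi^2}{27r^2}(m^2+mn+n^2)$. (By McCartin's theorem the Robin spectrum of $T$ with parameter $\sigma$ consists of the numbers $\Lambda_{m,n}(\sigma)$, $0\le m\le n$, with $\Lambda_{m,n}$ counted twice for $m<n$ and once for $m=n$.) *)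

theory Defs
  imports Complex_Main
begin

text \<open>The system determining (L,M,N) for inradius r, integers m n, and Robin parameter sigma.\<close>
definition robin_sys :: "real \<Rightarrow> nat \<Rightarrow> nat \<Rightarrow> real \<Rightarrow> real \<times> real \<times> real \<Rightarrow> bool" where
  "robin_sys r m n \<sigma> LMN \<longleftrightarrow> (case LMN of (L, M, N) \<Rightarrow>
     L \<in> {-pi/2<..0} \<and> M \<in> {0..<pi/2} \<and> N \<in> {0..<pi/2} \<and>
     (2*L - M - N - (real m + real n) * pi) * tan L = 3 * r * \<sigma> \<and>
     (2*M - N - L + real m * pi) * tan M = 3 * r * \<sigma> \<and>
     (2*N - L - M + real n * pi) * tan N = 3 * r * \<sigma>)"

text \<open>The unique solution (uniqueness is a standing fact from the paper).\<close>
definition robin_LMN :: "real \<Rightarrow> nat \<Rightarrow> nat \<Rightarrow> real \<Rightarrow> real \<times> real \<times> real" where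
  "robin_LMN r m n \<sigma> = (THE LMN. robin_sys r m n \<sigma> LMN)"

definition robin_Lambda :: "real \<Rightarrow> nat \<Rightarrow> nat \<Rightarrow> real \<Rightarrow> real" where
  "robin_Lambda r m n \<sigma> = (case robin_LMN r m n \<sigma> of (L, M, N) \<Rightarrow>
     let \<mu> = (2*M - N - L) / pi + real m;
         \<nu> = (2*N - L - M) / pi + real n
     in 4 * pi^2 / (27 * r^2) * (\<mu>^2 + \<mu>*\<nu> + \<nu>^2))"

end

theory Submission
  imports Defs "HOL-Analysis.Analysis"
begin

text \<open>
  Put \<open>s = 3 r \<sigma>\<close> and \<open>h(x) = s cot x - 3 x\<close>. With \<open>S = L + M + N\<close> the system reads
  \<open>h(M) = m\<pi> - S\<close>, \<open>h(N) = n\<pi> - S\<close>, \<open>h(-L) = S + (m + n)\<pi>\<close>. On \<open>(0, \<pi>/2]\<close> the function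
  \<open>h\<close> decreases with slope below \<open>-3\<close>, so its inverse is a strict \<open>1/3\<close>-contraction and \<open>S\<close> is
  the unique zero of a strictly decreasing continuous function; this yields the unique
  solution \<open>(L, M, N)\<close>.

  With \<open>b = 2M - N - L + m\<pi>\<close> and \<open>c = 2N - L - M + n\<pi>\<close> the gap
  \<open>\<Lambda>(\<sigma>) - \<Lambda>(0)\<close> is \<open>4/(27 r\<^sup>2)\<close> times \<open>G = b\<^sup>2 + b c + c\<^sup>2 - \<pi>\<^sup>2 (m\<^sup>2 + m n + n\<^sup>2)\<close>.
  For a positive definite quadratic form \<open>Q\<close> in \<open>2M - N - L\<close> and \<open>2N - L - M\<close>,
  \<open>G = 3\<pi>(mM + nN - (m + n)L) + Q > 0\<close>, and also \<open>G = 3(La + Mb + Nc) - Q\<close> where each product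
  is below \<open>s\<close> because \<open>x < tan x\<close> on \<open>(0, \<pi>/2)\<close>; hence \<open>G < 9 s = 27 r \<sigma>\<close>.
\<close>

lemma less_tan_self:
  fixes x :: real
  assumes "0 < x" "x < pi/2"
  shows "x < tan x"
proof -
  have "\<exists>z. 0 < z \<and> z < x \<and> tan x - tan 0 = (x - 0) * inverse ((cos z)\<^sup>2)"
  proof (rule MVT2[OF assms(1)])
    fix z :: real assume "0 \<le> z" "z \<le> x"
    then have "cos z \<noteq> 0"
      using assms cos_gt_zero_pi[of z] by auto
    then show "DERIV tan z :> inverse ((cos z)\<^sup>2)"
      by (rule DERIV_tan)
  qed
  then obtain z where z: "0 < z" "z < x" "tan x = x * inverse ((cos z)\<^sup>2)"
    by auto
  have "0 < cos z" "cos z < 1"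
    using z assms cos_monotone_0_pi[of 0 z] cos_gt_zero_pi[of z] by auto
  then have "1 < inverse ((cos z)\<^sup>2)"
    by (simp add: one_less_inverse power_less_one_iff)
  then show ?thesis
    using z assms by (simp add: less_1_mult)
qed

lemma cot_strict_decreasing:
  fixes x y :: real
  assumes "0 < x" "x < y" "y \<le> pi/2"
  shows "cot y < cot x"
proof -
  have sx: "0 < sin x" and sy: "0 < sin y" and "0 < sin (y - x)"
    using assms by (simp_all add: sin_gt_zero)
  then have "cos y * sin x < cos x * sin y"
    by (simp add: sin_diff algebra_simps)
  with sx sy show ?thesis
    by (simp add: cot_def divide_simps)
qed

definition hcot :: "real \<Rightarrow> real \<Rightarrow> real" where
  "hcot s x = s * cot x - 3 * x"

lemma hcot_pi_half [simp]: "hcot s (pi/2) = - 3 * pi / 2"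
  by (simp add: hcot_def cot_def)

lemma hcot_strict_decreasing:
  assumes "s > 0" "0 < x" "x < y" "y \<le> pi/2"
  shows "3 * (y - x) < hcot s x - hcot s y"
  using mult_strict_left_mono[OF cot_strict_decreasing[OF assms(2-4)] assms(1)]
  by (simp add: hcot_def)

lemma hcot_eq_iff_tan:
  assumes "s > 0" "0 < x" "x < pi/2"
  shows "hcot s x = c \<longleftrightarrow> (3 * x + c) * tan x = s"
proof -
  have "tan x > 0"
    using tan_gt_zero[OF assms(2,3)] .
  then have "hcot s x = s / tan x - 3 * x"
    by (simp add: hcot_def cot_altdef divide_inverse)
  with \<open>tan x > 0\<close> show ?thesis
    by (auto simp: field_simps)
qed

lemma hcot_unbounded:
  assumes "s > 0"
  obtains x where "0 < x" "x < pi/2" "T \<le> hcot s x"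
proof -
  have "0 < (\<bar>T\<bar> + 3 * pi / 2) / s"
    using assms pi_gt_zero by (intro divide_pos_pos add_nonneg_pos) auto
  from lemma_tan_total[OF this]
  obtain y where y: "0 < y" "y < pi/2" "(\<bar>T\<bar> + 3 * pi / 2) / s < tan y"
    by blast
  have "cot (pi/2 - y) = tan y"
    using tan_cot'[of "pi/2 - y"] by simp
  then have "\<bar>T\<bar> + 3 * pi / 2 < s * cot (pi/2 - y)"
    using y(3) assms by (simp add: pos_divide_less_eq mult.commute)
  then have "T \<le> hcot s (pi/2 - y)"
    using y by (simp add: hcot_def)
  then show ?thesis
    using y that[of "pi/2 - y"] by simp
qed

lemma hcot_surj:
  assumes "s > 0" "- 3 * pi / 2 \<le> t"
  shows "\<exists>x. 0 < x \<and> x \<le> pi/2 \<and> hcot s x = t"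
proof -
  obtain e where e: "0 < e" "e < pi/2" "t \<le> hcot s e"
    using hcot_unbounded[OF assms(1)] .
  have "sin x \<noteq> 0" if "x \<in> {e..pi/2}" for x
    using that e sin_gt_zero[of x] by auto
  then have "continuous_on {e..pi/2} (hcot s)"
    unfolding hcot_def by (intro continuous_intros) auto
  then obtain x where "e \<le> x" "x \<le> pi/2" "hcot s x = t"
    using IVT2'[of "hcot s" "pi/2" t e] e assms by auto
  then show ?thesis
    using e by (intro exI[of _ x]) auto
qed

text \<open>Clamping at \<open>hcot s (pi/2) = -3 pi/2\<close> makes the inverse total: it is \<open>pi/2\<close> below that value.\<close>

definition hcot_inv :: "real \<Rightarrow> real \<Rightarrow> real" where
  "hcot_inv s t = (SOME x. 0 < x \<and> x \<le> pi/2 \<and> hcot s x = max t (- 3 * pi / 2))"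

lemma hcot_inv_spec:
  assumes "s > 0"
  shows "0 < hcot_inv s t" "hcot_inv s t \<le> pi/2" "hcot s (hcot_inv s t) = max t (- 3 * pi / 2)"
proof -
  have "\<exists>x. 0 < x \<and> x \<le> pi/2 \<and> hcot s x = max t (- 3 * pi / 2)"
    using hcot_surj[OF assms] by simp
  from someI_ex[OF this]
  show "0 < hcot_inv s t" "hcot_inv s t \<le> pi/2" "hcot s (hcot_inv s t) = max t (- 3 * pi / 2)"
    unfolding hcot_inv_def by auto
qed

lemma hcot_inv_hcot:
  assumes "s > 0" "0 < x" "x < pi/2"
  shows "hcot_inv s (hcot s x) = x"
proof -
  let ?y = "hcot_inv s (hcot s x)"
  have "- 3 * pi / 2 < hcot s x"
    using hcot_strict_decreasing[OF assms(1,2,3)] assms by simp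
  then have "hcot s ?y = hcot s x"
    using hcot_inv_spec(3)[OF assms(1)] by simp
  moreover have "0 < ?y" "?y \<le> pi/2"
    using hcot_inv_spec[OF assms(1)] by auto
  ultimately show ?thesis
    using hcot_strict_decreasing[OF assms(1), of ?y x] hcot_strict_decreasing[OF assms(1,2), of ?y]
      assms by (cases "?y < x"; cases "x < ?y") auto
qed

lemma hcot_inv_less_pi_half:
  assumes "s > 0" "- 3 * pi / 2 < t"
  shows "hcot_inv s t < pi/2" "hcot s (hcot_inv s t) = t"
proof -
  show eq: "hcot s (hcot_inv s t) = t"
    using hcot_inv_spec(3)[OF assms(1)] assms(2) by simp
  show "hcot_inv s t < pi/2"
    using hcot_inv_spec(2)[OF assms(1), of t] eq assms(2) by (cases "hcot_inv s t = pi/2") auto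
qed

lemma hcot_inv_step:
  assumes "s > 0" "t < t'"
  shows "hcot_inv s t' \<le> hcot_inv s t" "3 * (hcot_inv s t - hcot_inv s t') < t' - t"
proof -
  define x x' where "x = hcot_inv s t" and "x' = hcot_inv s t'"
  have x: "0 < x" "x \<le> pi/2" "hcot s x = max t (- 3 * pi / 2)"
    and x': "0 < x'" "x' \<le> pi/2" "hcot s x' = max t' (- 3 * pi / 2)"
    unfolding x_def x'_def using hcot_inv_spec[OF assms(1)] by auto
  have "x' \<le> x"
  proof (rule ccontr)
    assume "\<not> x' \<le> x"
    then have "3 * (x' - x) < hcot s x - hcot s x'"
      using hcot_strict_decreasing[OF assms(1) x(1), of x'] x' by simp
    then show False
      using x(3) x'(3) assms(2) \<open>\<not> x' \<le> x\<close> by (simp add: max_def split: if_splits)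
  qed
  moreover have "3 * (x - x') < t' - t"
  proof (cases "x' = x")
    case False
    then have "3 * (x - x') < hcot s x' - hcot s x"
      using hcot_strict_decreasing[OF assms(1) x'(1), of x] x \<open>x' \<le> x\<close> by simp
    then show ?thesis
      using x(3) x'(3) assms(2) by (simp add: max_def split: if_splits)
  qed (use assms in simp)
  ultimately show "hcot_inv s t' \<le> hcot_inv s t" "3 * (hcot_inv s t - hcot_inv s t') < t' - t"
    unfolding x_def x'_def by auto
qed

lemma continuous_on_hcot_inv:
  assumes "s > 0"
  shows "continuous_on UNIV (hcot_inv s)"
proof (rule lipschitz_on_continuous_on)
  show "(1/3)-lipschitz_on UNIV (hcot_inv s)"
  proof (rule lipschitz_onI)
    fix t t' :: real
    show "dist (hcot_inv s t) (hcot_inv s t') \<le> 1/3 * dist t t'"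
      using hcot_inv_step[OF assms, of t t'] hcot_inv_step[OF assms, of t' t]
      by (cases t t' rule: linorder_cases) (auto simp: dist_real_def)
  qed simp
qed

definition robin_eqs :: "real \<Rightarrow> nat \<Rightarrow> nat \<Rightarrow> real \<Rightarrow> real \<Rightarrow> real \<Rightarrow> bool" where
  "robin_eqs s m n L M N \<longleftrightarrow>
     - (pi/2) < L \<and> L \<le> 0 \<and> 0 \<le> M \<and> M < pi/2 \<and> 0 \<le> N \<and> N < pi/2 \<and>
     (2*L - M - N - (real m + real n) * pi) * tan L = s \<and>
     (2*M - N - L + real m * pi) * tan M = s \<and>
     (2*N - L - M + real n * pi) * tan N = s"

lemma robin_sys_iff_robin_eqs:
  "robin_sys r m n \<sigma> (L, M, N) \<longleftrightarrow> robin_eqs (3 * r * \<sigma>) m n L M N"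
  unfolding robin_sys_def robin_eqs_def by auto

lemma robin_eqs_iff_hcot:
  assumes "s > 0"
  shows "robin_eqs s m n L M N \<longleftrightarrow>
    - (pi/2) < L \<and> L < 0 \<and> 0 < M \<and> M < pi/2 \<and> 0 < N \<and> N < pi/2 \<and>
    hcot s (- L) = L + M + N + (real m + real n) * pi \<and>
    hcot s M = real m * pi - (L + M + N) \<and>
    hcot s N = real n * pi - (L + M + N)"
proof -
  have iff: "(2*L - M - N - (real m + real n) * pi) * tan L = s \<and>
      (2*M - N - L + real m * pi) * tan M = s \<and>
      (2*N - L - M + real n * pi) * tan N = s \<longleftrightarrow>
      hcot s (- L) = L + M + N + (real m + real n) * pi \<and>
      hcot s M = real m * pi - (L + M + N) \<and>
      hcot s N = real n * pi - (L + M + N)"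
    if "- (pi/2) < L" "L < 0" "0 < M" "M < pi/2" "0 < N" "N < pi/2"
  proof -
    have "(3 * (- L) + (L + M + N + (real m + real n) * pi)) * tan (- L)
        = (2*L - M - N - (real m + real n) * pi) * tan L"
      and "3 * M + (real m * pi - (L + M + N)) = 2*M - N - L + real m * pi"
      and "3 * N + (real n * pi - (L + M + N)) = 2*N - L - M + real n * pi"
      by (simp_all add: algebra_simps)
    with that show ?thesis
      using hcot_eq_iff_tan[OF assms, of "- L" "L + M + N + (real m + real n) * pi"]
        hcot_eq_iff_tan[OF assms, of M "real m * pi - (L + M + N)"]
        hcot_eq_iff_tan[OF assms, of N "real n * pi - (L + M + N)"]
      by (simp only: neg_less_iff_less neg_0_less_iff_less minus_minus)
  qed
  have "L \<noteq> 0" "M \<noteq> 0" "N \<noteq> 0" if "robin_eqs s m n L M N"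
    using that assms by (auto simp: robin_eqs_def)
  then show ?thesis
    using iff by (auto simp: robin_eqs_def)
qed

lemma mult_less_of_tan_eq:
  fixes a x s :: real
  assumes "s > 0" "0 < x" "x < pi/2" "a * tan x = s"
  shows "x * a < s"
proof -
  have "0 < tan x"
    using tan_gt_zero[OF assms(2,3)] .
  then have "0 < a"
    using assms(1,4) zero_less_mult_pos2 by blast
  then show ?thesis
    using mult_strict_right_mono[OF less_tan_self[OF assms(2,3)] \<open>0 < a\<close>] assms(4)
    by (simp add: mult.commute)
qed

lemma robin_eqs_products_less:
  assumes "s > 0" "robin_eqs s m n L M N"
  shows "L * (2*L - M - N - (real m + real n) * pi) < s"
    "M * (2*M - N - L + real m * pi) < s"
    "N * (2*N - L - M + real n * pi) < s"
proof -
  note ranges = assms(2)[unfolded robin_eqs_iff_hcot[OF assms(1)]]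
  note eqs = assms(2)[unfolded robin_eqs_def]
  have "- (2*L - M - N - (real m + real n) * pi) * tan (- L)
      = (2*L - M - N - (real m + real n) * pi) * tan L"
    by (simp add: algebra_simps)
  also have "\<dots> = s"
    using eqs by blast
  finally have tanL: "- (2*L - M - N - (real m + real n) * pi) * tan (- L) = s" .
  have "0 < - L" "- L < pi/2"
    using ranges by auto
  from mult_less_of_tan_eq[OF assms(1) this tanL]
  show "L * (2*L - M - N - (real m + real n) * pi) < s"
    by (simp add: algebra_simps)
  show "M * (2*M - N - L + real m * pi) < s"
    using mult_less_of_tan_eq[OF assms(1)] ranges eqs by simp
  show "N * (2*N - L - M + real n * pi) < s"
    using mult_less_of_tan_eq[OF assms(1)] ranges eqs by simp
qed

lemma robin_eqs_zero_iff: "robin_eqs 0 m n L M N \<longleftrightarrow> L = 0 \<and> M = 0 \<and> N = 0"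
proof
  assume E: "robin_eqs 0 m n L M N"
  have tan_eq_0: "tan x = 0 \<longleftrightarrow> x = 0" if "- (pi/2) < x" "x < pi/2" for x :: real
    using that tan_gt_zero[of x] tan_less_zero[of x] by (cases x "0::real" rule: linorder_cases) auto
  have "0 \<le> real m * pi" "0 \<le> real n * pi"
    by auto
  have "L = 0"
  proof (rule ccontr)
    assume "L \<noteq> 0"
    then have "tan L \<noteq> 0"
      using E tan_eq_0[of L] by (auto simp: robin_eqs_def)
    moreover have "2*L - M - N - (real m + real n) * pi < 0"
      using E \<open>L \<noteq> 0\<close> \<open>0 \<le> real m * pi\<close> \<open>0 \<le> real n * pi\<close>
      unfolding robin_eqs_def ring_distribs by linarith
    ultimately show False
      using E by (simp add: robin_eqs_def)
  qed
  moreover have "M = 0 \<or> 2*M - N + real m * pi = 0" "N = 0 \<or> 2*N - M + real n * pi = 0"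
    using E tan_eq_0[of M] tan_eq_0[of N] \<open>L = 0\<close> by (auto simp: robin_eqs_def)
  ultimately show "L = 0 \<and> M = 0 \<and> N = 0"
    using E \<open>0 \<le> real m * pi\<close> \<open>0 \<le> real n * pi\<close> unfolding robin_eqs_def by linarith
qed (simp add: robin_eqs_def)

definition robin_defect :: "real \<Rightarrow> nat \<Rightarrow> nat \<Rightarrow> real \<Rightarrow> real" where
  "robin_defect s m n S = hcot_inv s (real m * pi - S) + hcot_inv s (real n * pi - S)
     - hcot_inv s (S + (real m + real n) * pi) - S"

lemma robin_eqs_hcot_inv:
  assumes "s > 0" "robin_eqs s m n L M N"
  shows "M = hcot_inv s (real m * pi - (L + M + N))"
    "N = hcot_inv s (real n * pi - (L + M + N))"
    "L = - hcot_inv s (L + M + N + (real m + real n) * pi)"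
  using assms(2) hcot_inv_hcot[OF assms(1), of M] hcot_inv_hcot[OF assms(1), of N]
    hcot_inv_hcot[OF assms(1), of "- L"]
  by (auto simp: robin_eqs_iff_hcot[OF assms(1)])

lemma robin_defect_strict_decreasing:
  assumes "s > 0" "S < T"
  shows "robin_defect s m n T < robin_defect s m n S"
proof -
  let ?c = "(real m + real n) * pi"
  have "3 * (hcot_inv s (S + ?c) - hcot_inv s (T + ?c)) < T - S"
    using hcot_inv_step(2)[OF assms(1), of "S + ?c" "T + ?c"] assms(2) by simp
  moreover have "3 * (hcot_inv s (real m * pi - T) - hcot_inv s (real m * pi - S)) < T - S"
    using hcot_inv_step(2)[OF assms(1), of "real m * pi - T" "real m * pi - S"] assms(2) by simp
  moreover have "3 * (hcot_inv s (real n * pi - T) - hcot_inv s (real n * pi - S)) < T - S"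
    using hcot_inv_step(2)[OF assms(1), of "real n * pi - T" "real n * pi - S"] assms(2) by simp
  ultimately show ?thesis
    unfolding robin_defect_def ring_distribs by linarith
qed

lemma robin_eqs_unique:
  assumes "s > 0" "robin_eqs s m n L M N" "robin_eqs s m n L' M' N'"
  shows "(L, M, N) = (L', M', N')"
proof -
  note A = robin_eqs_hcot_inv[OF assms(1,2)] and B = robin_eqs_hcot_inv[OF assms(1,3)]
  have "robin_defect s m n (L + M + N) = 0" "robin_defect s m n (L' + M' + N') = 0"
    using A B unfolding robin_defect_def by linarith+
  then have "L + M + N = L' + M' + N'"
    using robin_defect_strict_decreasing[OF assms(1), of "L + M + N" "L' + M' + N'" m n]
      robin_defect_strict_decreasing[OF assms(1), of "L' + M' + N'" "L + M + N" m n]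
    by (cases "L + M + N" "L' + M' + N'" rule: linorder_cases) auto
  then show ?thesis
    using A B by (metis minus_equation_iff)
qed

lemma robin_eqs_exists:
  assumes "s > 0"
  obtains L M N where "robin_eqs s m n L M N"
proof -
  note bounds = hcot_inv_spec(1,2)[OF assms]
  have "continuous_on {-pi..2*pi} (robin_defect s m n)"
    unfolding robin_defect_def
    by (intro continuous_intros continuous_on_compose2[OF continuous_on_hcot_inv[OF assms]]) auto
  moreover have "robin_defect s m n (2*pi) \<le> 0" "0 \<le> robin_defect s m n (-pi)"
    using bounds[of "real m * pi - 2*pi"] bounds[of "real n * pi - 2*pi"]
      bounds[of "2*pi + (real m + real n) * pi"] bounds[of "real m * pi - -pi"]
      bounds[of "real n * pi - -pi"] bounds[of "-pi + (real m + real n) * pi"]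
    unfolding robin_defect_def by linarith+
  ultimately obtain S where S: "robin_defect s m n S = 0"
    using IVT2'[of "robin_defect s m n" "2*pi" 0 "-pi"] by auto
  define L M N where "L = - hcot_inv s (S + (real m + real n) * pi)"
    and "M = hcot_inv s (real m * pi - S)" and "N = hcot_inv s (real n * pi - S)"
  have sum: "S = L + M + N"
    using S unfolding robin_defect_def L_def M_def N_def by linarith
  have "- (pi/2) \<le> L" "L < 0" "0 < M" "M \<le> pi/2" "0 < N" "N \<le> pi/2"
    using bounds unfolding L_def M_def N_def by (auto simp: minus_le_iff)
  moreover have "0 \<le> real m * pi" "0 \<le> real n * pi"
    by simp_all
  ultimately have args: "- 3 * pi / 2 < real m * pi - S" "- 3 * pi / 2 < real n * pi - S"
    "- 3 * pi / 2 < S + (real m + real n) * pi"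
    unfolding sum ring_distribs by linarith+
  have "M < pi/2" "hcot s M = real m * pi - S" "N < pi/2" "hcot s N = real n * pi - S"
    "- L < pi/2" "hcot s (- L) = S + (real m + real n) * pi"
    using hcot_inv_less_pi_half[OF assms args(1)] hcot_inv_less_pi_half[OF assms args(2)]
      hcot_inv_less_pi_half[OF assms args(3)]
    unfolding L_def M_def N_def by simp_all
  with \<open>L < 0\<close> \<open>0 < M\<close> \<open>0 < N\<close> have "robin_eqs s m n L M N"
    unfolding robin_eqs_iff_hcot[OF assms] sum by auto
  then show ?thesis
    by (rule that)
qed

lemma robin_LMN_eqI:
  assumes "robin_eqs (3 * r * \<sigma>) m n L M N"
    and "\<And>L' M' N'. robin_eqs (3 * r * \<sigma>) m n L' M' N' \<Longrightarrow> (L', M', N') = (L, M, N)"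
  shows "robin_LMN r m n \<sigma> = (L, M, N)"
  unfolding robin_LMN_def
proof (rule the_equality)
  show "robin_sys r m n \<sigma> (L, M, N)"
    using assms(1) by (simp add: robin_sys_iff_robin_eqs)
  show "p = (L, M, N)" if "robin_sys r m n \<sigma> p" for p
    using that assms(2) by (cases p) (simp add: robin_sys_iff_robin_eqs)
qed

lemma robin_LMN_zero: "robin_LMN r m n 0 = (0, 0, 0)"
  by (rule robin_LMN_eqI) (simp_all add: robin_eqs_zero_iff)

lemma robin_LMN_solves:
  assumes "0 < r * \<sigma>"
  obtains L M N where "robin_LMN r m n \<sigma> = (L, M, N)" "robin_eqs (3 * r * \<sigma>) m n L M N"
proof -
  have s: "0 < 3 * r * \<sigma>"
    using assms by (simp add: mult.assoc)
  obtain L M N where "robin_eqs (3 * r * \<sigma>) m n L M N"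
    using robin_eqs_exists[OF s] .
  moreover from this have "robin_LMN r m n \<sigma> = (L, M, N)"
    by (intro robin_LMN_eqI robin_eqs_unique[OF s]) auto
  ultimately show ?thesis
    using that by blast
qed

lemma quadratic_form_pos:
  fixes x y :: real
  assumes "x \<noteq> 0 \<or> y \<noteq> 0"
  shows "0 < x\<^sup>2 + x * y + y\<^sup>2"
proof -
  have "4 * (x\<^sup>2 + x * y + y\<^sup>2) = (2 * x + y)\<^sup>2 + 3 * y\<^sup>2"
    by (simp add: power2_eq_square algebra_simps)
  moreover have "0 < (2 * x + y)\<^sup>2 + 3 * y\<^sup>2"
    using assms by (cases "y = 0") (auto intro: add_nonneg_pos)
  ultimately have "0 < 4 * (x\<^sup>2 + x * y + y\<^sup>2)"
    by simp
  then show ?thesis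
    by simp
qed

lemma robin_Lambda_eq:
  assumes "robin_LMN r m n \<sigma> = (L, M, N)"
  shows "robin_Lambda r m n \<sigma> = 4 / (27 * r\<^sup>2) *
    ((2*M - N - L + real m * pi)\<^sup>2 + (2*M - N - L + real m * pi) * (2*N - L - M + real n * pi)
     + (2*N - L - M + real n * pi)\<^sup>2)"
proof -
  define \<mu> \<nu> where "\<mu> = (2*M - N - L) / pi + real m" and "\<nu> = (2*N - L - M) / pi + real n"
  have "pi * \<mu> = 2*M - N - L + real m * pi" "pi * \<nu> = 2*N - L - M + real n * pi"
    unfolding \<mu>_def \<nu>_def by (simp_all add: field_simps)
  moreover have "robin_Lambda r m n \<sigma> = 4 * pi\<^sup>2 / (27 * r\<^sup>2) * (\<mu>\<^sup>2 + \<mu> * \<nu> + \<nu>\<^sup>2)"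
    unfolding robin_Lambda_def assms \<mu>_def \<nu>_def by (simp only: Let_def prod.case)
  moreover have "pi\<^sup>2 * (\<mu>\<^sup>2 + \<mu> * \<nu> + \<nu>\<^sup>2) = (pi * \<mu>)\<^sup>2 + (pi * \<mu>) * (pi * \<nu>) + (pi * \<nu>)\<^sup>2"
    by (simp add: power2_eq_square algebra_simps)
  ultimately show ?thesis
    by simp
qed

lemma robin_gap_bounds:
  assumes "s > 0" "robin_eqs s m n L M N"
  defines "b \<equiv> 2*M - N - L + real m * pi" and "c \<equiv> 2*N - L - M + real n * pi"
  defines "G \<equiv> b\<^sup>2 + b * c + c\<^sup>2 - ((real m * pi)\<^sup>2 + (real m * pi) * (real n * pi) + (real n * pi)\<^sup>2)"
  shows "0 < G" "G < 9 * s"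
proof -
  define a where "a = 2*L - M - N - (real m + real n) * pi"
  define Q where "Q = (2*M - N - L)\<^sup>2 + (2*M - N - L) * (2*N - L - M) + (2*N - L - M)\<^sup>2"
  have signs: "L < 0" "0 < M" "0 < N"
    using assms(2) by (simp_all add: robin_eqs_iff_hcot[OF assms(1)])
  have "G = 3 * pi * (real m * M + real n * N - (real m + real n) * L) + Q"
    unfolding G_def Q_def b_def c_def by (simp add: power2_eq_square algebra_simps)
  moreover have "0 \<le> real m * M" "0 \<le> real n * N" "(real m + real n) * L \<le> 0"
    using signs by (simp_all add: mult_nonneg_nonpos)
  moreover have "0 < Q"
    unfolding Q_def using signs by (intro quadratic_form_pos) linarith
  ultimately show "0 < G"
    by (simp add: add_nonneg_pos)
  have "G = 3 * (L * a + M * b + N * c) - Q"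
    unfolding G_def Q_def a_def b_def c_def by (simp add: power2_eq_square algebra_simps)
  moreover have "L * a < s" "M * b < s" "N * c < s"
    using robin_eqs_products_less[OF assms(1,2)] unfolding a_def b_def c_def .
  ultimately show "G < 9 * s"
    using \<open>0 < Q\<close> unfolding distrib_left by linarith
qed

theorem mainTheorem2:
  fixes r \<sigma> :: real and m n :: nat
  assumes "r > 0" and "\<sigma> > 0"
  shows "0 < robin_Lambda r m n \<sigma> - robin_Lambda r m n 0
       \<and> robin_Lambda r m n \<sigma> - robin_Lambda r m n 0 < 4 / r * \<sigma>"
proof -
  obtain L M N where LMN: "robin_LMN r m n \<sigma> = (L, M, N)"
    and eqs: "robin_eqs (3 * r * \<sigma>) m n L M N"
    using robin_LMN_solves[of r \<sigma> m n] assms by auto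
  define G where "G = (2*M - N - L + real m * pi)\<^sup>2
    + (2*M - N - L + real m * pi) * (2*N - L - M + real n * pi) + (2*N - L - M + real n * pi)\<^sup>2
    - ((real m * pi)\<^sup>2 + (real m * pi) * (real n * pi) + (real n * pi)\<^sup>2)"
  have gap: "robin_Lambda r m n \<sigma> - robin_Lambda r m n 0 = 4 / (27 * r\<^sup>2) * G"
    unfolding robin_Lambda_eq[OF LMN] robin_Lambda_eq[OF robin_LMN_zero] G_def
    by (simp add: right_diff_distrib)
  have "0 < 3 * r * \<sigma>"
    using assms by simp
  note G = robin_gap_bounds[OF this eqs, folded G_def]
  have "4 / (27 * r\<^sup>2) * G < 4 / (27 * r\<^sup>2) * (9 * (3 * r * \<sigma>))"
    using G(2) assms by (intro mult_strict_left_mono) auto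
  also have "\<dots> = 4 / r * \<sigma>"
    using assms by (simp add: power2_eq_square)
  finally show ?thesis
    using gap G(1) assms by simp
qed

end
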